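(* Let $0\le\underline{m}<m$ and $r\ge0$ be integers, $\epsilon\in(0,1/2)$, and $k=m-\underline{m}$. If $z'\in\{0,1\}^{\mathbb{F}_2^{\underline{m}}}$ has independent entries each equal to $1$ with probability $\epsilon$, then $$\mathbb{P}\big[P_e(\underline{m},m,r,\epsilon\mid z')\ge P_e(m,r,\epsilon)/2+1/4\big]\le\frac{2^{2-k}}{(1/2-P_e(m,r,\epsilon))^2}.$$
   Context: $RM(m,r)$ is the set of evaluation vectors $(f(x))_{x\in\mathbb{F}_2^m}$ of polynomials over $\mathbb{F}_2$ in $m$ variables of degree at most $r$. Draw $f$ uniformly from $RM(m,r)$, $Z\in\{0,1\}^{\mathbb{F}_2^m}$ with i.i.d. Bernoulli$(\epsilon)$ entries independent of $f$, and $\tilde f=f+Z$. $L_{m,r,\epsilon}(\tilde f)$ is the most likely value of $f(0^m)$ given $\tilde f(x)$ for all $x\ne0^m$ (uniformly random if tied), and $P_e(m,r,\epsilon)=\mathbb{P}(L_{m,r,\epsilon}(\tilde f)\ne f(0^m))$. Identify $\mathbb{F}_2^{\underline{m}}$ with $\mathbb{F}_2^{\underline{m}}\times\{0\}^{m-\underline{m}}\subseteq\mathbb{F}_2^m$; for $z'\in\{0,1\}^{\mathbb{F}_2^{\underline{m}}}$, $P_e(\underline{m},m,r,\epsilon\mid z')$ is the probability that $L_{m,r,\epsilon}(\tilde f)\ne f(0^m)$ conditioned on the restriction of $Z$ to $\mathbb{F}_2^{\underline{m}}\times\{0\}^{m-\underline{m}}$ being $z'$. *)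

theory Defs
  imports Complex_Main
begin

text \<open>Points of F_2^m are boolean lists of length m; word (evaluation vectors,
  noise vectors) are functions on boolean lists that vanish outside the cube.\<close>

definition pts :: "nat \<Rightarrow> bool list set" where
  "pts m = {xs. length xs = m}"

definition zero_pt :: "nat \<Rightarrow> bool list" where
  "zero_pt m = replicate m False"

definition words :: "nat \<Rightarrow> (bool list \<Rightarrow> bool) set" where
  "words m = {z. \<forall>x. x \<notin> pts m \<longrightarrow> \<not> z x}"

text \<open>Evaluation of the polynomial sum over S of c(S) prod_{i in S} x_i, S ranging
  over subsets of {0..<m} of size at most r (multilinear monomials of degree at most r).\<close>

definition rm_eval :: "nat \<Rightarrow> nat \<Rightarrow> (nat set \<Rightarrow> bool) \<Rightarrow> bool list \<Rightarrow> bool" where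
  "rm_eval m r c x =
     (x \<in> pts m \<and>
      odd (card {S. S \<subseteq> {0..<m} \<and> card S \<le> r \<and> c S \<and> (\<forall>i\<in>S. x ! i)}))"

definition RM :: "nat \<Rightarrow> nat \<Rightarrow> (bool list \<Rightarrow> bool) set" where
  "RM m r = {f. \<exists>c. f = rm_eval m r c}"

definition noise_w :: "nat \<Rightarrow> real \<Rightarrow> (bool list \<Rightarrow> bool) \<Rightarrow> real" where
  "noise_w m eps z = (\<Prod>x\<in>pts m. if z x then eps else 1 - eps)"

definition lik :: "nat \<Rightarrow> real \<Rightarrow> (bool list \<Rightarrow> bool) \<Rightarrow> (bool list \<Rightarrow> bool) \<Rightarrow> real" where
  "lik m eps f y = (\<Prod>x\<in>pts m - {zero_pt m}. if y x = f x then 1 - eps else eps)"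

text \<open>Unnormalised posterior weight (uniform prior on RM) of f(0) = b given y.\<close>

definition post :: "nat \<Rightarrow> nat \<Rightarrow> real \<Rightarrow> bool \<Rightarrow> (bool list \<Rightarrow> bool) \<Rightarrow> real" where
  "post m r eps b y = (\<Sum>f\<in>{f\<in>RM m r. f (zero_pt m) = b}. lik m eps f y)"

text \<open>Probability (over the uniform tie-break) that the MAP decoder L_{m,r,eps}
  applied to y outputs a value different from the bit b.\<close>

definition dec_err :: "nat \<Rightarrow> nat \<Rightarrow> real \<Rightarrow> bool \<Rightarrow> (bool list \<Rightarrow> bool) \<Rightarrow> real" where
  "dec_err m r eps b y =
     (if post m r eps (\<not> b) y > post m r eps b y then 1
      else if post m r eps (\<not> b) y = post m r eps b y then 1/2 else 0)"

text \<open>Joint probability that f = f0 is sent (uniformly from RM), Z = z, and the decoder errs.\<close>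

definition err_term :: "nat \<Rightarrow> nat \<Rightarrow> real \<Rightarrow> (bool list \<Rightarrow> bool) \<Rightarrow> (bool list \<Rightarrow> bool) \<Rightarrow> real" where
  "err_term m r eps f z =
     noise_w m eps z * dec_err m r eps (f (zero_pt m)) (\<lambda>x. f x \<noteq> z x) / real (card (RM m r))"

definition Pe :: "nat \<Rightarrow> nat \<Rightarrow> real \<Rightarrow> real" where
  "Pe m r eps = (\<Sum>f\<in>RM m r. \<Sum>z\<in>words m. err_term m r eps f z)"

definition restricts :: "nat \<Rightarrow> nat \<Rightarrow> (bool list \<Rightarrow> bool) \<Rightarrow> (bool list \<Rightarrow> bool) \<Rightarrow> bool" where
  "restricts mu m z z' = (\<forall>ys\<in>pts mu. z (ys @ replicate (m - mu) False) = z' ys)"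

definition Pe_cond :: "nat \<Rightarrow> nat \<Rightarrow> nat \<Rightarrow> real \<Rightarrow> (bool list \<Rightarrow> bool) \<Rightarrow> real" where
  "Pe_cond mu m r eps z' =
     (\<Sum>f\<in>RM m r. \<Sum>z\<in>{z\<in>words m. restricts mu m z z'}. err_term m r eps f z)
     / (\<Sum>z\<in>{z\<in>words m. restricts mu m z z'}. noise_w m eps z)"

end

theory Submission
  imports Defs
begin

text \<open>Let \<open>err_prob z\<close> be the error probability of the decoder given the noise pattern \<open>z\<close>, averaged over
  the codeword. Then \<open>P_e(m, r, eps)\<close> is its mean and \<open>P_e(mu, m, r, eps | z')\<close> its conditional expectation
  given \<open>z\<close> on the subcube \<open>W = F\<^sub>2^mu \<times> 0\<close>, so by Chebyshev's inequality it suffices to bound the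
  variance of that conditional expectation by \<open>2 ^ (-k) / 4\<close>. The shears \<open>(u, w) \<mapsto> (u, w + M u)\<close>,
  \<open>M\<close> a \<open>k \<times> mu\<close> matrix over \<open>F\<^sub>2\<close>, are involutions fixing \<open>0\<close> that preserve \<open>RM(m, r)\<close>; hence
  \<open>err_prob\<close> is invariant under them and all sheared copies of \<open>W\<close> carry the same conditional variance.
  A nonzero point lies in a fraction \<open>2 ^ (-k)\<close> of these copies and \<open>err_prob\<close> ignores the noise at \<open>0\<close>,
  so an Efron--Stein type inequality bounds the common conditional variance by
  \<open>2 ^ (-k) Var(err_prob) \<le> 2 ^ (-k) / 4\<close>.\<close>

lemma bij_betw_involution:
  assumes "\<And>x. x \<in> S \<Longrightarrow> A (A x) = x" "\<And>x. x \<in> S \<Longrightarrow> A x \<in> S"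
  shows "bij_betw A S S"
  by (rule bij_betw_byWitness[where f'=A]) (use assms in auto)

lemma mem_image_involution:
  assumes "\<And>y. A (A y) = y"
  shows "x \<in> A ` S \<longleftrightarrow> A x \<in> S"
proof
  assume "A x \<in> S"
  then have "A (A x) \<in> A ` S" by (rule imageI)
  then show "x \<in> A ` S" by (simp add: assms)
qed (auto simp: assms)

lemma odd_card_sym_diff:
  assumes "finite A" "finite B"
  shows "odd (card (sym_diff A B)) \<longleftrightarrow> odd (card A) \<noteq> odd (card B)"
proof -
  have "card (sym_diff A B) + card (A \<inter> B) = card (A \<union> B)"
    using assms by (subst card_Un_disjoint[symmetric]) (auto intro: arg_cong[where f=card])
  then have "card (sym_diff A B) + 2 * card (A \<inter> B) = card A + card B"
    using card_Un_Int[OF assms] by simp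
  then show ?thesis by (metis even_add even_mult_iff even_numeral)
qed

lemma card_eq_card_mult_fibre:
  assumes "finite A" "finite B" "g ` A \<subseteq> B" "\<And>b. b \<in> B \<Longrightarrow> card {a\<in>A. g a = b} = n"
  shows "card A = card B * n"
proof -
  have "card A = (\<Sum>b\<in>B. card {a\<in>A. g a = b})"
    using sum.group[OF assms(1-3), of "\<lambda>_. 1::nat"] by simp
  then show ?thesis using assms(4) by simp
qed

section \<open>Product Bernoulli measures on boolean patterns\<close>

definition flip_prob :: "real \<Rightarrow> bool \<Rightarrow> real" where
  "flip_prob e b = (if b then e else 1 - e)"

definition patterns :: "'a set \<Rightarrow> ('a \<Rightarrow> bool) set" where
  "patterns X = {z. \<forall>x. x \<notin> X \<longrightarrow> \<not> z x}"

definition pattern_prob :: "real \<Rightarrow> 'a set \<Rightarrow> ('a \<Rightarrow> bool) \<Rightarrow> real" where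
  "pattern_prob e X z = (\<Prod>x\<in>X. flip_prob e (z x))"

lemma patterns_empty: "patterns {} = {\<lambda>_. False}"
  by (auto simp: patterns_def)

lemma patterns_insert:
  assumes "n \<notin> X"
  shows "patterns (insert n X) = (\<lambda>(z, b). z(n := b)) ` (patterns X \<times> UNIV)"
proof
  show "patterns (insert n X) \<subseteq> (\<lambda>(z, b). z(n := b)) ` (patterns X \<times> UNIV)"
  proof
    fix z assume "z \<in> patterns (insert n X)"
    then have "(z(n := False), z n) \<in> patterns X \<times> UNIV" by (simp add: patterns_def)
    moreover have "z = (\<lambda>(z, b). z(n := b)) (z(n := False), z n)" by simp
    ultimately show "z \<in> (\<lambda>(z, b). z(n := b)) ` (patterns X \<times> UNIV)" by (rule rev_image_eqI)
  qed
qed (auto simp: patterns_def)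

lemma inj_on_fun_upd_patterns:
  assumes "n \<notin> X"
  shows "inj_on (\<lambda>(z, b). z(n := b)) (patterns X \<times> UNIV)"
proof (rule inj_onI, clarify)
  fix z b z' b'
  assume "z \<in> patterns X" "z' \<in> patterns X" and eq: "z(n := b) = z'(n := b')"
  then have "z n = z' n" using assms by (simp add: patterns_def)
  then have "z x = z' x" for x
    using fun_cong[OF eq, of x] by (cases "x = n") auto
  moreover have "b = b'" using fun_cong[OF eq, of n] by simp
  ultimately show "z = z' \<and> b = b'" by blast
qed

lemma finite_patterns: "finite X \<Longrightarrow> finite (patterns X)"
  by (induction X rule: finite_induct) (simp_all add: patterns_empty patterns_insert)

lemma sum_patterns_insert:
  assumes "n \<notin> X"
  shows "(\<Sum>z\<in>patterns (insert n X). h z) = (\<Sum>z\<in>patterns X. h (z(n := False)) + h (z(n := True)))"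
proof -
  have "(\<Sum>z\<in>patterns (insert n X). h z) = (\<Sum>(z, b)\<in>patterns X \<times> UNIV. h (z(n := b)))"
    unfolding patterns_insert[OF assms] sum.reindex[OF inj_on_fun_upd_patterns[OF assms]]
    by (simp add: case_prod_unfold)
  also have "\<dots> = (\<Sum>z\<in>patterns X. \<Sum>b\<in>UNIV. h (z(n := b)))"
    by (rule sum.cartesian_product[symmetric])
  finally show ?thesis by (simp add: UNIV_bool add.commute)
qed

lemma pattern_prob_insert_fun_upd:
  assumes "finite X" "n \<notin> X"
  shows "pattern_prob e (insert n X) (z(n := b)) = flip_prob e b * pattern_prob e X z"
  using assms unfolding pattern_prob_def by (auto intro!: prod.cong)

lemma pattern_prob_pos: "0 < e \<Longrightarrow> e < 1 \<Longrightarrow> 0 < pattern_prob e X z"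
  unfolding pattern_prob_def flip_prob_def by (rule prod_pos) auto

lemma sum_pattern_prob: "finite X \<Longrightarrow> (\<Sum>z\<in>patterns X. pattern_prob e X z) = 1"
proof (induction X rule: finite_induct)
  case empty
  then show ?case by (simp add: patterns_empty pattern_prob_def)
next
  case (insert n X)
  then show ?case
    by (simp add: sum_patterns_insert pattern_prob_insert_fun_upd flip_prob_def
        flip: sum.distrib distrib_right)
qed

section \<open>Variances of conditional expectations\<close>

text \<open>For the product Bernoulli(\<open>e\<close>) measure on \<open>patterns X\<close>, \<open>partial_mean e X S f v\<close> is
  \<open>E[f; z = v on S]\<close>, and dividing it by \<open>pattern_prob e S v\<close> gives \<open>E[f | z = v on S]\<close>.
  Thus \<open>cond_second_moment e X S f\<close> is \<open>E[E[f | z on S]^2]\<close> and \<open>cond_variance e X S f\<close> is the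
  variance of \<open>E[f | z on S]\<close>.\<close>

definition partial_mean :: "real \<Rightarrow> 'a set \<Rightarrow> 'a set \<Rightarrow> (('a \<Rightarrow> bool) \<Rightarrow> real) \<Rightarrow> ('a \<Rightarrow> bool) \<Rightarrow> real" where
  "partial_mean e X S f v = (\<Sum>z\<in>{z\<in>patterns X. \<forall>x\<in>S. z x = v x}. pattern_prob e X z * f z)"

definition cond_second_moment :: "real \<Rightarrow> 'a set \<Rightarrow> 'a set \<Rightarrow> (('a \<Rightarrow> bool) \<Rightarrow> real) \<Rightarrow> real" where
  "cond_second_moment e X S f = (\<Sum>v\<in>patterns S. (partial_mean e X S f v)\<^sup>2 / pattern_prob e S v)"

definition cond_variance :: "real \<Rightarrow> 'a set \<Rightarrow> 'a set \<Rightarrow> (('a \<Rightarrow> bool) \<Rightarrow> real) \<Rightarrow> real" where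
  "cond_variance e X S f = cond_second_moment e X S f - cond_second_moment e X {} f"

definition coord_mean :: "real \<Rightarrow> 'a \<Rightarrow> (('a \<Rightarrow> bool) \<Rightarrow> real) \<Rightarrow> ('a \<Rightarrow> bool) \<Rightarrow> real" where
  "coord_mean e n f z = (1 - e) * f (z(n := False)) + e * f (z(n := True))"

definition coord_diff :: "'a \<Rightarrow> (('a \<Rightarrow> bool) \<Rightarrow> real) \<Rightarrow> ('a \<Rightarrow> bool) \<Rightarrow> real" where
  "coord_diff n f z = f (z(n := True)) - f (z(n := False))"

lemma partial_mean_insert:
  assumes "finite X" "n \<notin> X"
  shows "partial_mean e (insert n X) S f v =
     (if n \<in> S \<and> v n then 0 else (1 - e) * partial_mean e X (S - {n}) (\<lambda>z. f (z(n := False))) v)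
   + (if n \<in> S \<and> \<not> v n then 0 else e * partial_mean e X (S - {n}) (\<lambda>z. f (z(n := True))) v)"
proof -
  have agree: "(\<forall>x\<in>S. (z(n := b)) x = v x) \<longleftrightarrow> (n \<in> S \<longrightarrow> b = v n) \<and> (\<forall>x\<in>S - {n}. z x = v x)"
    for z b by auto
  let ?term = "\<lambda>X S f z. if \<forall>x\<in>S. z x = v x then pattern_prob e X z * f z else 0"
  have "partial_mean e (insert n X) S f v = (\<Sum>z\<in>patterns (insert n X). ?term (insert n X) S f z)"
    unfolding partial_mean_def by (rule sum.inter_filter[OF finite_patterns]) (simp add: assms)
  also have "\<dots> = (\<Sum>z\<in>patterns X.
        (if n \<in> S \<and> v n then 0 else (1 - e) * ?term X (S - {n}) (\<lambda>z. f (z(n := False))) z)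
      + (if n \<in> S \<and> \<not> v n then 0 else e * ?term X (S - {n}) (\<lambda>z. f (z(n := True))) z))"
    unfolding sum_patterns_insert[OF assms(2)]
    by (rule sum.cong) (auto simp: agree pattern_prob_insert_fun_upd[OF assms] flip_prob_def)
  also have "\<dots> = (if n \<in> S \<and> v n then 0 else (1 - e) * partial_mean e X (S - {n}) (\<lambda>z. f (z(n := False))) v)
   + (if n \<in> S \<and> \<not> v n then 0 else e * partial_mean e X (S - {n}) (\<lambda>z. f (z(n := True))) v)"
    unfolding partial_mean_def sum.distrib
    by (simp add: sum.inter_filter[OF finite_patterns[OF assms(1)]] sum_distrib_left)
  finally show ?thesis .
qed

lemma partial_mean_linear:
  "partial_mean e X S (\<lambda>z. a * f z + c * g z) v = a * partial_mean e X S f v + c * partial_mean e X S g v"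
  unfolding partial_mean_def by (simp add: sum.distrib sum_distrib_left algebra_simps)

lemma partial_mean_cong: "(\<And>x. x \<in> S \<Longrightarrow> v x = v' x) \<Longrightarrow> partial_mean e X S f v = partial_mean e X S f v'"
  unfolding partial_mean_def by (rule sum.cong) auto

lemma cond_second_moment_insert_mem:
  assumes "finite X" "n \<notin> X" "n \<in> S" "S \<subseteq> insert n X" "0 < e" "e < 1"
  shows "cond_second_moment e (insert n X) S f =
    (1 - e) * cond_second_moment e X (S - {n}) (\<lambda>z. f (z(n := False)))
      + e * cond_second_moment e X (S - {n}) (\<lambda>z. f (z(n := True)))"
proof -
  define S' where "S' = S - {n}"
  have S: "S = insert n S'" "n \<notin> S'" "finite S'"
    using assms(1,3,4) finite_subset by (auto simp: S'_def)
  let ?pm = "\<lambda>b v. partial_mean e X S' (\<lambda>z. f (z(n := b))) v"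
  have cong: "partial_mean e X (S - {n}) g (v(n := b)) = partial_mean e X (S - {n}) g v" for g v b
    using S(2) by (intro partial_mean_cong) (auto simp: S'_def)
  have "(partial_mean e (insert n X) S f (v(n := b)))\<^sup>2 / pattern_prob e S (v(n := b))
      = flip_prob e b * ((?pm b v)\<^sup>2 / pattern_prob e S' v)" for v b
  proof -
    have "partial_mean e (insert n X) S f (v(n := b)) = flip_prob e b * ?pm b v"
      using partial_mean_insert[OF assms(1,2), of e S f "v(n := b)"] assms(3)
      by (cases b) (simp_all add: S'_def flip_prob_def cong)
    moreover have "pattern_prob e S (v(n := b)) = flip_prob e b * pattern_prob e S' v"
      unfolding S(1) by (rule pattern_prob_insert_fun_upd[OF S(3,2)])
    moreover have "flip_prob e b \<noteq> 0" using assms(5,6) by (simp add: flip_prob_def)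
    ultimately show ?thesis by (simp add: power2_eq_square)
  qed
  then show ?thesis
    unfolding cond_second_moment_def S(1) sum_patterns_insert[OF S(2)]
    by (simp add: S'_def flip_prob_def sum.distrib sum_distrib_left)
qed

lemma cond_second_moment_insert_nonmem:
  assumes "finite X" "n \<notin> X" "n \<notin> S"
  shows "cond_second_moment e (insert n X) S f = cond_second_moment e X S (coord_mean e n f)"
proof -
  have "partial_mean e (insert n X) S f v = partial_mean e X S (coord_mean e n f) v" for v
    using partial_mean_insert[OF assms(1,2), of e S f v] assms(3)
      partial_mean_linear[of e X S "1 - e" "\<lambda>z. f (z(n := False))" e "\<lambda>z. f (z(n := True))" v]
    by (simp add: coord_mean_def[abs_def])
  then show ?thesis unfolding cond_second_moment_def by simp
qed

lemma cond_second_moment_mix: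
  "(1 - e) * cond_second_moment e X S f0 + e * cond_second_moment e X S f1 =
   cond_second_moment e X S (\<lambda>z. (1 - e) * f0 z + e * f1 z)
     + e * (1 - e) * cond_second_moment e X S (\<lambda>z. f1 z - f0 z)"
proof -
  have diff: "partial_mean e X S (\<lambda>z. f1 z - f0 z) v = partial_mean e X S f1 v - partial_mean e X S f0 v" for v
    using partial_mean_linear[of e X S 1 f1 "-1" f0 v] by simp
  have "(1 - e) * (a\<^sup>2 / t) + e * (b\<^sup>2 / t) = ((1 - e) * a + e * b)\<^sup>2 / t + e * (1 - e) * ((b - a)\<^sup>2 / t)"
    for a b t :: real
    by (cases "t = 0") (simp_all add: field_simps power2_eq_square)
  then show ?thesis
    unfolding cond_second_moment_def partial_mean_linear diff
    by (simp add: sum_distrib_left flip: sum.distrib)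
qed

lemma cond_second_moment_insert:
  assumes "finite X" "n \<notin> X" "S \<subseteq> insert n X" "0 < e" "e < 1"
  shows "cond_second_moment e (insert n X) S f = cond_second_moment e X (S - {n}) (coord_mean e n f)
     + (if n \<in> S then e * (1 - e) * cond_second_moment e X (S - {n}) (coord_diff n f) else 0)"
proof (cases "n \<in> S")
  case True
  then show ?thesis
    using cond_second_moment_insert_mem[OF assms(1,2) True assms(3-5)]
      cond_second_moment_mix[of e X "S - {n}" "\<lambda>z. f (z(n := False))" "\<lambda>z. f (z(n := True))"]
    by (simp add: coord_mean_def[abs_def] coord_diff_def[abs_def])
next
  case False
  then have "S - {n} = S" by blast
  with False show ?thesis using cond_second_moment_insert_nonmem[OF assms(1,2) False] by simp
qed

lemma cond_second_moment_insert_full: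
  assumes "finite X" "n \<notin> X" "0 < e" "e < 1"
  shows "cond_second_moment e (insert n X) (insert n X) f = cond_second_moment e X X (coord_mean e n f)
     + e * (1 - e) * cond_second_moment e X X (coord_diff n f)"
proof -
  have "insert n X - {n} = X" using assms(2) by blast
  then show ?thesis using cond_second_moment_insert[OF assms(1,2) subset_refl assms(3,4), of f] by simp
qed

lemma cond_second_moment_nonneg: "0 < e \<Longrightarrow> e < 1 \<Longrightarrow> 0 \<le> cond_second_moment e X S f"
  unfolding cond_second_moment_def by (intro sum_nonneg divide_nonneg_pos) (auto intro: pattern_prob_pos)

lemma cond_second_moment_zero: "cond_second_moment e X S (\<lambda>_. 0) = 0"
  by (simp add: cond_second_moment_def partial_mean_def)

lemma cond_second_moment_empty: "cond_second_moment e X {} f = (\<Sum>z\<in>patterns X. pattern_prob e X z * f z)\<^sup>2"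
  by (simp add: cond_second_moment_def partial_mean_def patterns_empty pattern_prob_def)

lemma partial_mean_full:
  assumes "v \<in> patterns X"
  shows "partial_mean e X X f v = pattern_prob e X v * f v"
proof -
  have "{z\<in>patterns X. \<forall>x\<in>X. z x = v x} = {v}"
    using assms by (auto simp: patterns_def fun_eq_iff)
  then show ?thesis unfolding partial_mean_def by simp
qed

lemma cond_second_moment_full:
  assumes "0 < e" "e < 1"
  shows "cond_second_moment e X X f = (\<Sum>z\<in>patterns X. pattern_prob e X z * (f z)\<^sup>2)"
  unfolding cond_second_moment_def
  by (rule sum.cong) (use pattern_prob_pos[OF assms] in \<open>simp_all add: partial_mean_full power2_eq_square\<close>)

lemma cond_second_moment_le_full:
  assumes "finite X" "S \<subseteq> X" "0 < e" "e < 1"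
  shows "cond_second_moment e X S f \<le> cond_second_moment e X X f"
  using assms(1,2)
proof (induction X arbitrary: S f rule: finite_induct)
  case empty
  then show ?case by simp
next
  case (insert n X)
  have "S - {n} \<subseteq> X" using insert.prems by auto
  then have IH: "cond_second_moment e X (S - {n}) g \<le> cond_second_moment e X X g" for g
    using insert.IH by blast
  have "e * (1 - e) * cond_second_moment e X (S - {n}) (coord_diff n f)
      \<le> e * (1 - e) * cond_second_moment e X X (coord_diff n f)"
    using assms(3,4) IH by (intro mult_left_mono) auto
  moreover have "0 \<le> e * (1 - e) * cond_second_moment e X X (coord_diff n f)"
    using assms(3,4) by (intro mult_nonneg_nonneg cond_second_moment_nonneg) auto
  ultimately show ?case
    using cond_second_moment_insert[OF insert(1,2) insert.prems assms(3,4), of f]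
      cond_second_moment_insert_full[OF insert(1,2) assms(3,4), of f] IH[of "coord_mean e n f"]
    by auto
qed

lemma coord_diff_coord_mean_eq_zero:
  assumes "x \<noteq> n" "coord_diff x f = (\<lambda>_. 0)"
  shows "coord_diff x (coord_mean e n f) = (\<lambda>_. 0)"
proof -
  have "coord_diff x (coord_mean e n f) = coord_mean e n (coord_diff x f)"
    using assms(1) by (simp add: coord_diff_def coord_mean_def fun_eq_iff fun_upd_twist algebra_simps)
  then show ?thesis by (simp add: assms(2) coord_mean_def fun_eq_iff)
qed

lemma sum_cond_second_moment_le:
  assumes "finite X" "finite J" "\<And>j. j \<in> J \<Longrightarrow> T j \<subseteq> X" "0 < e" "e < 1"
    and "real (card J) \<le> c \<or> g = (\<lambda>_. 0)"
  shows "(\<Sum>j\<in>J. cond_second_moment e X (T j) g) \<le> c * cond_second_moment e X X g"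
  using assms(6)
proof
  assume card: "real (card J) \<le> c"
  have "(\<Sum>j\<in>J. cond_second_moment e X (T j) g) \<le> real (card J) * cond_second_moment e X X g"
    using sum_mono[of J "\<lambda>j. cond_second_moment e X (T j) g" "\<lambda>_. cond_second_moment e X X g"]
      cond_second_moment_le_full[OF assms(1) assms(3) assms(4,5)] by simp
  also have "\<dots> \<le> c * cond_second_moment e X X g"
    using card cond_second_moment_nonneg[OF assms(4,5)] by (rule mult_right_mono)
  finally show ?thesis .
qed (simp add: cond_second_moment_zero)

lemma cond_variance_insert:
  assumes "finite X" "n \<notin> X" "S \<subseteq> insert n X" "0 < e" "e < 1"
  shows "cond_variance e (insert n X) S f = cond_variance e X (S - {n}) (coord_mean e n f)
     + (if n \<in> S then e * (1 - e) * cond_second_moment e X (S - {n}) (coord_diff n f) else 0)"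
  using cond_second_moment_insert[OF assms, of f]
    cond_second_moment_insert[OF assms(1,2) empty_subsetI assms(4,5), of f]
  unfolding cond_variance_def by simp

text \<open>Splitting off one coordinate \<open>n\<close>, the conditional second
  moment on \<open>S\<close> is that of the averaged function on \<open>S - {n}\<close> plus, when \<open>n \<in> S\<close>, a nonnegative
  term in the discrete derivative along \<open>n\<close>; that term is counted once for every \<open>S j\<close> containing \<open>n\<close>.\<close>

lemma sum_cond_variance_le:
  fixes S :: "'j \<Rightarrow> 'a set"
  assumes "finite X" "finite J" "\<And>j. j \<in> J \<Longrightarrow> S j \<subseteq> X" "0 < e" "e < 1"
    and "\<And>x. x \<in> X \<Longrightarrow> real (card {j\<in>J. x \<in> S j}) \<le> c \<or> coord_diff x f = (\<lambda>_. 0)"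
  shows "(\<Sum>j\<in>J. cond_variance e X (S j) f) \<le> c * cond_variance e X X f"
  using assms(1,3,6)
proof (induction X arbitrary: S f rule: finite_induct)
  case empty
  then show ?case by (simp add: cond_variance_def)
next
  case (insert n X)
  let ?g = "coord_mean e n f" and ?D = "coord_diff n f"
  let ?rest = "\<lambda>j. if n \<in> S j then e * (1 - e) * cond_second_moment e X (S j - {n}) ?D else 0"
  have "insert n X - {n} = X" using insert(2) by blast
  then have var_full: "cond_variance e (insert n X) (insert n X) f
      = cond_variance e X X ?g + e * (1 - e) * cond_second_moment e X X ?D"
    using cond_variance_insert[OF insert(1,2) subset_refl assms(4,5), of f] by simp
  have "(\<Sum>j\<in>J. cond_variance e X (S j - {n}) ?g) \<le> c * cond_variance e X X ?g"
  proof (rule insert.IH)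
    show "S j - {n} \<subseteq> X" if "j \<in> J" for j using insert.prems(1)[OF that] by blast
    show "real (card {j\<in>J. x \<in> S j - {n}}) \<le> c \<or> coord_diff x ?g = (\<lambda>_. 0)" if "x \<in> X" for x
    proof -
      have "x \<noteq> n" using that insert(2) by blast
      then have "{j\<in>J. x \<in> S j - {n}} = {j\<in>J. x \<in> S j}" by blast
      then show ?thesis using insert.prems(2)[of x] that coord_diff_coord_mean_eq_zero[OF \<open>x \<noteq> n\<close>] by auto
    qed
  qed
  moreover have "(\<Sum>j\<in>J. ?rest j) \<le> c * (e * (1 - e) * cond_second_moment e X X ?D)"
  proof -
    have "(\<Sum>j\<in>J. ?rest j) = e * (1 - e) * (\<Sum>j\<in>{j\<in>J. n \<in> S j}. cond_second_moment e X (S j - {n}) ?D)"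
      by (auto simp: sum_distrib_left sum.inter_filter[OF assms(2), symmetric] intro!: sum.cong)
    also have "\<dots> \<le> e * (1 - e) * (c * cond_second_moment e X X ?D)"
      using assms(2,4,5) insert(1) insert.prems
      by (intro mult_left_mono sum_cond_second_moment_le) auto
    finally show ?thesis by (simp only: mult_ac)
  qed
  ultimately show ?case
    using cond_variance_insert[OF insert(1,2) insert.prems(1) assms(4,5)]
    by (simp add: var_full sum.distrib distrib_left)
qed

lemma pattern_prob_image: "inj_on A T \<Longrightarrow> pattern_prob e (A ` T) w = pattern_prob e T (w \<circ> A)"
  unfolding pattern_prob_def by (simp add: prod.reindex)

lemma comp_in_patterns_image:
  assumes "\<And>x. A (A x) = x" "w \<in> patterns T"
  shows "w \<circ> A \<in> patterns (A ` T)"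
  using assms(2) mem_image_involution[of A, OF assms(1)] by (auto simp: patterns_def)

lemma bij_betw_comp_patterns:
  assumes "\<And>x. A (A x) = x"
  shows "bij_betw (\<lambda>w. w \<circ> A) (patterns T) (patterns (A ` T))"
proof (rule bij_betw_byWitness[where f'="\<lambda>w. w \<circ> A"])
  have "A ` A ` T = T" using assms by (simp add: image_comp)
  then show "(\<lambda>w. w \<circ> A) ` patterns (A ` T) \<subseteq> patterns T"
    using comp_in_patterns_image[OF assms, of _ "A ` T"] by auto
qed (simp_all add: assms comp_in_patterns_image image_subset_iff comp_assoc[symmetric] fun_eq_iff)

lemma partial_mean_image:
  assumes "\<And>x. A (A x) = x" "A ` X = X" "\<And>z. f (z \<circ> A) = f z"
  shows "partial_mean e X (A ` S) f (u \<circ> A) = partial_mean e X S f u"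
proof -
  have inj: "inj_on A X" by (metis assms(1) inj_onI)
  have prob: "pattern_prob e X (z \<circ> A) = pattern_prob e X z" for z
    using pattern_prob_image[OF inj, of e "z \<circ> A"] by (simp add: assms(1,2) comp_def)
  have "bij_betw (\<lambda>z. z \<circ> A) (patterns X) (patterns X)"
    using bij_betw_comp_patterns[OF assms(1), of X] by (simp add: assms(2))
  then have "bij_betw (\<lambda>z. z \<circ> A) {z\<in>patterns X. \<forall>x\<in>S. z x = u x}
      {z\<in>patterns X. \<forall>x\<in>A ` S. z x = (u \<circ> A) x}"
    by (rule bij_betw_Collect) (simp add: assms(1))
  then show ?thesis
    unfolding partial_mean_def by (simp add: prob assms(3) flip: sum.reindex_bij_betw)
qed

lemma cond_second_moment_image:
  assumes "\<And>x. A (A x) = x" "A ` X = X" "\<And>z. f (z \<circ> A) = f z"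
  shows "cond_second_moment e X (A ` S) f = cond_second_moment e X S f"
proof -
  have inj: "inj_on A S" by (metis assms(1) inj_onI)
  have "pattern_prob e (A ` S) (u \<circ> A) = pattern_prob e S u" for u
    by (simp add: pattern_prob_image[OF inj] assms(1) comp_def)
  then show ?thesis
    unfolding cond_second_moment_def partial_mean_image[of A X f, OF assms]
      sum.reindex_bij_betw[OF bij_betw_comp_patterns[OF assms(1)], symmetric] by simp
qed

lemma sum_partial_mean:
  assumes "finite X" "S \<subseteq> X"
  shows "(\<Sum>v\<in>patterns S. partial_mean e X S f v) = (\<Sum>z\<in>patterns X. pattern_prob e X z * f z)"
proof -
  define restr where "restr z = (\<lambda>x. x \<in> S \<and> z x)" for z :: "'a \<Rightarrow> bool"
  have "finite S" using assms finite_subset by blast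
  have "restr ` patterns X \<subseteq> patterns S" by (auto simp: restr_def patterns_def)
  moreover have "{z\<in>patterns X. restr z = v} = {z\<in>patterns X. \<forall>x\<in>S. z x = v x}" if "v \<in> patterns S" for v
    using that by (auto simp: restr_def patterns_def fun_eq_iff)
  ultimately show ?thesis
    unfolding partial_mean_def
    using sum.group[OF finite_patterns[OF assms(1)] finite_patterns[OF \<open>finite S\<close>], of restr]
    by (simp cong: sum.cong)
qed

lemma partial_mean_const_one:
  assumes "finite X" "S \<subseteq> X"
  shows "partial_mean e X S (\<lambda>_. 1) v = pattern_prob e S v"
  using assms
proof (induction X arbitrary: S rule: finite_induct)
  case empty
  then show ?case by (simp add: partial_mean_def patterns_empty pattern_prob_def)
next
  case (insert n X)
  have IH: "partial_mean e X (S - {n}) (\<lambda>_. 1) v = pattern_prob e (S - {n}) v"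
    using insert.prems by (intro insert.IH) auto
  show ?case
  proof (cases "n \<in> S")
    case True
    have "finite (S - {n})" using insert.prems insert(1) finite_subset by blast
    then have "pattern_prob e S v = flip_prob e (v n) * pattern_prob e (S - {n}) v"
      using True pattern_prob_insert_fun_upd[of "S - {n}" n e v "v n"] by (simp add: insert_absorb)
    then show ?thesis
      using partial_mean_insert[OF insert(1,2), of e S "\<lambda>_. 1" v] True IH by (simp add: flip_prob_def)
  next
    case False
    then show ?thesis
      using partial_mean_insert[OF insert(1,2), of e S "\<lambda>_. 1" v] IH by (simp add: algebra_simps)
  qed
qed

lemma cond_variance_eq_sum:
  fixes f :: "('a \<Rightarrow> bool) \<Rightarrow> real"
  assumes "finite X" "S \<subseteq> X" "0 < e" "e < 1"
  defines "E \<equiv> \<Sum>z\<in>patterns X. pattern_prob e X z * f z"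
  shows "cond_variance e X S f =
    (\<Sum>v\<in>patterns S. pattern_prob e S v * (partial_mean e X S f v / pattern_prob e S v - E)\<^sup>2)"
proof -
  have "finite S" using assms(1,2) finite_subset by blast
  have "pattern_prob e S v * (partial_mean e X S f v / pattern_prob e S v - E)\<^sup>2
      = (partial_mean e X S f v)\<^sup>2 / pattern_prob e S v - 2 * E * partial_mean e X S f v
        + E\<^sup>2 * pattern_prob e S v" for v
    using pattern_prob_pos[OF assms(3,4), of S v] by (simp add: field_simps power2_eq_square)
  then have "(\<Sum>v\<in>patterns S. pattern_prob e S v * (partial_mean e X S f v / pattern_prob e S v - E)\<^sup>2)
      = cond_second_moment e X S f - 2 * E * (\<Sum>v\<in>patterns S. partial_mean e X S f v)
        + E\<^sup>2 * (\<Sum>v\<in>patterns S. pattern_prob e S v)"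
    by (simp add: cond_second_moment_def sum.distrib sum_subtractf sum_distrib_left)
  also have "\<dots> = cond_second_moment e X S f - E\<^sup>2"
    by (simp add: sum_partial_mean[OF assms(1,2)] sum_pattern_prob[OF \<open>finite S\<close>] E_def power2_eq_square)
  finally show ?thesis by (simp add: cond_variance_def cond_second_moment_empty E_def)
qed

lemma cond_variance_full_le_quarter:
  assumes "finite X" "0 < e" "e < 1" "\<And>z. 0 \<le> f z" "\<And>z. f z \<le> 1"
  shows "cond_variance e X X f \<le> 1 / 4"
proof -
  let ?E = "\<Sum>z\<in>patterns X. pattern_prob e X z * f z"
  have "cond_second_moment e X X f \<le> ?E"
    unfolding cond_second_moment_full[OF assms(2,3)]
  proof (rule sum_mono)
    fix z
    have "(f z)\<^sup>2 \<le> f z" using assms(4,5) by (simp add: power2_eq_square mult_left_le)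
    then show "pattern_prob e X z * (f z)\<^sup>2 \<le> pattern_prob e X z * f z"
      using pattern_prob_pos[OF assms(2,3), of X z] by (intro mult_left_mono) auto
  qed
  moreover have "?E - ?E\<^sup>2 \<le> 1 / 4"
    using zero_le_power2[of "?E - 1 / 2"] by (simp add: power2_eq_square algebra_simps)
  ultimately show ?thesis by (simp add: cond_variance_def cond_second_moment_empty)
qed

section \<open>Reed--Muller codes and their shear automorphisms\<close>

definition monomial :: "nat \<Rightarrow> nat set \<Rightarrow> bool list \<Rightarrow> bool" where
  "monomial m S x = (x \<in> pts m \<and> (\<forall>i\<in>S. x ! i))"

definition monomials :: "nat \<Rightarrow> nat \<Rightarrow> nat set set" where
  "monomials m r = {S. S \<subseteq> {0..<m} \<and> card S \<le> r}"

lemma finite_monomials: "finite (monomials m r)"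
  by (rule finite_subset[of _ "Pow {0..<m}"]) (auto simp: monomials_def)

lemma rm_eval_eq_parity: "rm_eval m r c x = odd (card {S\<in>monomials m r. c S \<and> monomial m S x})"
  by (cases "x \<in> pts m") (auto simp: rm_eval_def monomials_def monomial_def intro!: arg_cong[where f=card])

lemma RM_xor:
  assumes "f \<in> RM m r" "g \<in> RM m r"
  shows "(\<lambda>x. f x \<noteq> g x) \<in> RM m r"
proof -
  obtain c d where cd: "f = rm_eval m r c" "g = rm_eval m r d" using assms by (auto simp: RM_def)
  have "(\<lambda>x. f x \<noteq> g x) = rm_eval m r (\<lambda>S. c S \<noteq> d S)"
  proof
    fix x
    let ?A = "{S\<in>monomials m r. c S \<and> monomial m S x}" and ?B = "{S\<in>monomials m r. d S \<and> monomial m S x}"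
    have "{S\<in>monomials m r. (c S \<noteq> d S) \<and> monomial m S x} = sym_diff ?A ?B" by auto
    then show "(f x \<noteq> g x) = rm_eval m r (\<lambda>S. c S \<noteq> d S) x"
      unfolding cd rm_eval_eq_parity using odd_card_sym_diff[of ?A ?B] finite_monomials by simp
  qed
  then show ?thesis by (auto simp: RM_def)
qed

lemma RM_const_False: "(\<lambda>_. False) \<in> RM m r"
proof -
  have "(\<lambda>_. False) = rm_eval m r (\<lambda>_. False)" by (simp add: fun_eq_iff rm_eval_eq_parity)
  then show ?thesis by (auto simp: RM_def)
qed

lemma RM_parity_sum:
  assumes "finite I" "\<And>i. i \<in> I \<Longrightarrow> g i \<in> RM m r"
  shows "(\<lambda>x. odd (card {i\<in>I. g i x})) \<in> RM m r"
  using assms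
proof (induction I rule: finite_induct)
  case empty
  then show ?case using RM_const_False by simp
next
  case (insert a I)
  have "{i\<in>insert a I. g i x} = (if g a x then insert a {i\<in>I. g i x} else {i\<in>I. g i x})" for x
    by auto
  then have "(\<lambda>x. odd (card {i\<in>insert a I. g i x})) = (\<lambda>x. g a x \<noteq> odd (card {i\<in>I. g i x}))"
    using insert(1,2) by (auto simp: fun_eq_iff)
  moreover have "(\<lambda>x. g a x \<noteq> odd (card {i\<in>I. g i x})) \<in> RM m r"
    using insert by (intro RM_xor) auto
  ultimately show ?case by simp
qed

lemma monomial_in_RM: "S \<in> monomials m r \<Longrightarrow> monomial m S \<in> RM m r"
proof -
  assume S: "S \<in> monomials m r"
  have "monomial m S = rm_eval m r (\<lambda>T. T = S)"
  proof
    fix x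
    have "{T\<in>monomials m r. T = S \<and> monomial m T x} = (if monomial m S x then {S} else {})"
      using S by auto
    then show "monomial m S x = rm_eval m r (\<lambda>T. T = S) x" unfolding rm_eval_eq_parity by simp
  qed
  then show ?thesis by (auto simp: RM_def)
qed

definition xor_update :: "nat \<Rightarrow> nat set \<Rightarrow> bool list \<Rightarrow> bool list" where
  "xor_update b T x = x[b := (x ! b \<noteq> odd (card {i\<in>T. x ! i}))]"

lemma monomial_comp_xor_update:
  assumes "S \<in> monomials m r" "b < m" "T \<subseteq> {0..<m}" "b \<notin> T"
  shows "monomial m S \<circ> xor_update b T \<in> RM m r"
proof (cases "b \<in> S")
  case False
  then have "xor_update b T x ! i = x ! i" if "i \<in> S" for x i
    using that by (metis nth_list_update_neq xor_update_def)
  then have "monomial m S \<circ> xor_update b T = monomial m S"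
    by (auto simp: fun_eq_iff monomial_def xor_update_def pts_def)
  then show ?thesis using monomial_in_RM[OF assms(1)] by simp
next
  case True
  \<comment> \<open>substituting \<open>x_b + (sum of x_i, i in T)\<close> for \<open>x_b\<close> turns the monomial of \<open>S\<close> into itself
    plus the monomials of \<open>insert i (S - {b})\<close>, \<open>i \<in> T\<close>, none of degree above \<open>card S\<close>\<close>
  let ?mon = "\<lambda>i. monomial m (insert i (S - {b}))"
  have "finite S" using assms(1) by (auto simp: monomials_def intro: finite_subset)
  have mem: "insert i (S - {b}) \<in> monomials m r" if "i \<in> T" for i
  proof -
    have "card (insert i (S - {b})) \<le> card S"
      using card_insert_le_m1[of "card S" "S - {b}" i] card_Suc_Diff1[OF \<open>finite S\<close> True] by simp
    then show ?thesis using assms(1,3) that by (auto simp: monomials_def)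
  qed
  have "(monomial m S \<circ> xor_update b T) x = (monomial m S x \<noteq> odd (card {i\<in>T. ?mon i x}))" for x
  proof (cases "x \<in> pts m")
    case True
    let ?P = "\<forall>j\<in>S - {b}. x ! j"
    have "{i\<in>T. ?mon i x} = (if ?P then {i\<in>T. x ! i} else {})"
      using True by (auto simp: monomial_def)
    moreover have "(\<forall>j\<in>S. x ! j) \<longleftrightarrow> ?P \<and> x ! b" using \<open>b \<in> S\<close> by blast
    moreover have "(\<forall>j\<in>S. xor_update b T x ! j) \<longleftrightarrow> ?P \<and> (x ! b \<noteq> odd (card {i\<in>T. x ! i}))"
      using True assms(2) \<open>b \<in> S\<close> by (auto simp: xor_update_def pts_def nth_list_update)
    ultimately show ?thesis using True by (auto simp: monomial_def xor_update_def pts_def)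
  qed (simp add: monomial_def xor_update_def pts_def)
  moreover have "(\<lambda>x. monomial m S x \<noteq> odd (card {i\<in>T. ?mon i x})) \<in> RM m r"
    using assms(3) finite_subset mem
    by (intro RM_xor monomial_in_RM[OF assms(1)] RM_parity_sum monomial_in_RM) auto
  ultimately show ?thesis by (simp add: comp_def)
qed

lemma RM_comp_xor_update:
  assumes "f \<in> RM m r" "b < m" "T \<subseteq> {0..<m}" "b \<notin> T"
  shows "f \<circ> xor_update b T \<in> RM m r"
proof -
  obtain c where c: "f = rm_eval m r c" using assms(1) by (auto simp: RM_def)
  have "f \<circ> xor_update b T = (\<lambda>x. odd (card {S\<in>{S\<in>monomials m r. c S}. (monomial m S \<circ> xor_update b T) x}))"
    unfolding c by (auto simp: rm_eval_eq_parity fun_eq_iff intro!: arg_cong[where f="\<lambda>A. odd (card A)"])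
  also have "\<dots> \<in> RM m r"
    using finite_monomials monomial_comp_xor_update[unfolded comp_def] assms(2-4)
    by (intro RM_parity_sum) auto
  finally show ?thesis .
qed

definition row_parity :: "nat \<Rightarrow> (nat \<Rightarrow> nat \<Rightarrow> bool) \<Rightarrow> bool list \<Rightarrow> nat \<Rightarrow> bool" where
  "row_parity mu M x j = odd (card {i. i < mu \<and> M j i \<and> x ! i})"

text \<open>\<open>shear mu M k\<close> is the linear involution \<open>(u, w) \<mapsto> (u, w + M u)\<close> of
  \<open>F\<^sub>2^mu \<times> F\<^sub>2^k\<close>, where \<open>M j i\<close> is the entry of the \<open>k \<times> mu\<close> matrix \<open>M\<close> in row \<open>j\<close> and column \<open>i\<close>;
  it is built one coordinate of \<open>w\<close> at a time, so that each step visibly preserves \<open>RM m r\<close>.\<close>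

primrec shear :: "nat \<Rightarrow> (nat \<Rightarrow> nat \<Rightarrow> bool) \<Rightarrow> nat \<Rightarrow> bool list \<Rightarrow> bool list" where
  "shear mu M 0 x = x"
| "shear mu M (Suc t) x = xor_update (mu + t) {i. i < mu \<and> M t i} (shear mu M t x)"

lemma length_shear [simp]: "length (shear mu M t x) = length x"
  by (induction t) (simp_all add: xor_update_def)

lemma nth_shear:
  "p < length x \<Longrightarrow>
    shear mu M t x ! p = (if mu \<le> p \<and> p < mu + t then x ! p \<noteq> row_parity mu M x (p - mu) else x ! p)"
proof (induction t arbitrary: p)
  case 0
  then show ?case by auto
next
  case (Suc t)
  show ?case
  proof (cases "p = mu + t")
    case True
    have "shear mu M t x ! i = x ! i" if "i < mu" for i
      using Suc.IH[of i] Suc.prems True that by simp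
    then have "{i \<in> {i. i < mu \<and> M t i}. shear mu M t x ! i} = {i. i < mu \<and> M t i \<and> x ! i}"
      by auto
    then show ?thesis
      using Suc.IH[of p] Suc.prems True by (simp add: xor_update_def row_parity_def)
  next
    case False
    then show ?thesis using Suc.IH[of p] Suc.prems by (simp add: xor_update_def)
  qed
qed

lemma row_parity_shear:
  assumes "mu \<le> length x"
  shows "row_parity mu M (shear mu M' t x) j = row_parity mu M x j"
proof -
  have "shear mu M' t x ! i = x ! i" if "i < mu" for i
    using nth_shear[of i x mu M' t] that assms by simp
  then have "{i. i < mu \<and> M j i \<and> shear mu M' t x ! i} = {i. i < mu \<and> M j i \<and> x ! i}" by auto
  then show ?thesis unfolding row_parity_def by simp
qed

lemma shear_shear: "shear mu M t (shear mu M t x) = x"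
proof (rule nth_equalityI)
  fix p assume "p < length (shear mu M t (shear mu M t x))"
  then have p: "p < length x" by simp
  have "mu \<le> p \<Longrightarrow> row_parity mu M (shear mu M t x) (p - mu) = row_parity mu M x (p - mu)"
    using p by (intro row_parity_shear) simp
  then show "shear mu M t (shear mu M t x) ! p = x ! p"
    using p by (auto simp: nth_shear)
qed simp

lemma shear_image_pts: "shear mu M t ` pts m = pts m"
proof
  show "pts m \<subseteq> shear mu M t ` pts m"
  proof
    fix x assume "x \<in> pts m"
    then have "shear mu M t x \<in> pts m" by (simp add: pts_def)
    then show "x \<in> shear mu M t ` pts m" by (rule rev_image_eqI) (simp add: shear_shear)
  qed
qed (auto simp: pts_def)

lemma not_row_parity: "(\<And>i. i < mu \<Longrightarrow> \<not> x ! i) \<Longrightarrow> \<not> row_parity mu M x j"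
proof -
  assume "\<And>i. i < mu \<Longrightarrow> \<not> x ! i"
  then have "{i. i < mu \<and> M j i \<and> x ! i} = {}" by auto
  then show ?thesis unfolding row_parity_def by (simp only:) simp
qed

lemma shear_replicate_False: "shear mu M t (replicate n False) = replicate n False"
proof (rule nth_equalityI)
  fix p assume "p < length (shear mu M t (replicate n False))"
  then have "p < n" by simp
  then have "mu \<le> p \<Longrightarrow> \<not> row_parity mu M (replicate n False) j" for j
    by (intro not_row_parity) simp
  then show "shear mu M t (replicate n False) ! p = replicate n False ! p"
    using \<open>p < n\<close> by (simp add: nth_shear)
qed simp

lemma RM_comp_shear:
  assumes "mu + t \<le> m" "f \<in> RM m r"
  shows "f \<circ> shear mu M t \<in> RM m r"
  using assms
proof (induction t arbitrary: f)
  case 0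
  then show ?case by (simp add: comp_def)
next
  case (Suc t)
  have step: "f \<circ> xor_update (mu + t) {i. i < mu \<and> M t i} \<in> RM m r"
    using Suc.prems by (intro RM_comp_xor_update) auto
  have "(f \<circ> xor_update (mu + t) {i. i < mu \<and> M t i}) \<circ> shear mu M t \<in> RM m r"
    by (rule Suc.IH) (use Suc.prems(1) step in \<open>auto simp: comp_def\<close>)
  then show ?case by (simp add: comp_def)
qed

section \<open>Bit-MAP decoding\<close>

lemma finite_pts: "finite (pts m)"
  using finite_lists_length_eq[of "UNIV :: bool set" m] by (simp add: pts_def)

lemma card_pts: "card (pts m) = 2 ^ m"
  using card_lists_length_eq[of "UNIV :: bool set" m] by (simp add: pts_def)

lemma zero_pt_in_pts: "zero_pt m \<in> pts m"
  by (simp add: zero_pt_def pts_def)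

lemma words_eq_patterns: "words m = patterns (pts m)"
  by (simp add: words_def patterns_def)

lemma noise_w_eq_pattern_prob: "noise_w m eps z = pattern_prob eps (pts m) z"
  by (simp add: noise_w_def pattern_prob_def flip_prob_def)

lemma finite_RM: "finite (RM m r)"
proof -
  have "RM m r \<subseteq> (\<lambda>C. rm_eval m r (\<lambda>S. S \<in> C)) ` Pow (monomials m r)"
  proof
    fix f assume "f \<in> RM m r"
    then obtain c where c: "f = rm_eval m r c" by (auto simp: RM_def)
    then have "f = rm_eval m r (\<lambda>S. S \<in> {S\<in>monomials m r. c S})"
      by (simp add: fun_eq_iff rm_eval_eq_parity conj_assoc)
    then show "f \<in> (\<lambda>C. rm_eval m r (\<lambda>S. S \<in> C)) ` Pow (monomials m r)" by blast
  qed
  then show ?thesis by (rule finite_subset) (simp add: finite_monomials)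
qed

lemma card_RM_pos: "0 < card (RM m r)"
  using finite_RM RM_const_False card_gt_0_iff by blast

lemma RM_subset_words: "RM m r \<subseteq> words m"
  by (auto simp: RM_def words_def rm_eval_def)

lemma post_cong:
  "(\<And>x. x \<in> pts m - {zero_pt m} \<Longrightarrow> y x = y' x) \<Longrightarrow> post m r eps b y = post m r eps b y'"
  unfolding post_def lik_def by (intro sum.cong prod.cong) auto

lemma dec_err_cong:
  "(\<And>x. x \<in> pts m - {zero_pt m} \<Longrightarrow> y x = y' x) \<Longrightarrow> dec_err m r eps b y = dec_err m r eps b y'"
  unfolding dec_err_def using post_cong[of m y y'] by presburger

definition err_prob :: "nat \<Rightarrow> nat \<Rightarrow> real \<Rightarrow> (bool list \<Rightarrow> bool) \<Rightarrow> real" where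
  "err_prob m r eps z =
     (\<Sum>f\<in>RM m r. dec_err m r eps (f (zero_pt m)) (\<lambda>x. f x \<noteq> z x)) / real (card (RM m r))"

lemma dec_err_bounds: "0 \<le> dec_err m r eps b y" "dec_err m r eps b y \<le> 1"
  by (simp_all add: dec_err_def)

lemma err_prob_nonneg: "0 \<le> err_prob m r eps z"
  unfolding err_prob_def by (intro divide_nonneg_nonneg sum_nonneg) (simp_all add: dec_err_bounds)

lemma err_prob_le_one: "err_prob m r eps z \<le> 1"
proof -
  have "(\<Sum>f\<in>RM m r. dec_err m r eps (f (zero_pt m)) (\<lambda>x. f x \<noteq> z x)) \<le> real (card (RM m r))"
    using sum_bounded_above[of "RM m r" "\<lambda>f. dec_err m r eps (f (zero_pt m)) (\<lambda>x. f x \<noteq> z x)" 1]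
    by (simp add: dec_err_bounds)
  then show ?thesis using card_RM_pos[of m r] by (simp add: err_prob_def)
qed

lemma coord_diff_err_prob_zero_pt: "coord_diff (zero_pt m) (err_prob m r eps) = (\<lambda>_. 0)"
proof -
  have "err_prob m r eps (z(zero_pt m := c)) = err_prob m r eps z" for z c
    unfolding err_prob_def by (intro arg_cong[where f="\<lambda>s. s / _"] sum.cong dec_err_cong) auto
  then show ?thesis by (simp add: coord_diff_def fun_eq_iff)
qed

lemma Pe_eq_expectation: "Pe m r eps = (\<Sum>z\<in>words m. noise_w m eps z * err_prob m r eps z)"
  unfolding Pe_def err_term_def err_prob_def
  by (subst sum.swap) (simp add: sum_distrib_left sum_divide_distrib)

lemma err_prob_comp_involution:
  assumes invol: "\<And>x. A (A x) = x" and zero: "A (zero_pt m) = zero_pt m"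
    and pts: "\<And>x. A x \<in> pts m \<longleftrightarrow> x \<in> pts m"
    and RM: "\<And>f. f \<in> RM m r \<Longrightarrow> f \<circ> A \<in> RM m r"
  shows "err_prob m r eps (z \<circ> A) = err_prob m r eps z"
proof -
  have comp_invol: "f \<circ> A \<circ> A = f" for f :: "bool list \<Rightarrow> bool"
    by (simp add: fun_eq_iff invol)
  have "A x \<noteq> zero_pt m" if "x \<noteq> zero_pt m" for x
    using that invol[of x] zero by metis
  then have bij_pts: "bij_betw A (pts m - {zero_pt m}) (pts m - {zero_pt m})"
    by (intro bij_betw_involution) (auto simp: invol pts)
  have bij_code: "bij_betw (\<lambda>f. f \<circ> A) {f\<in>RM m r. P f} {f\<in>RM m r. P f}"
    if "\<And>f. P (f \<circ> A) \<longleftrightarrow> P f" for P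
    by (intro bij_betw_involution) (simp_all add: comp_invol RM that)
  have lik: "lik m eps (f \<circ> A) (y \<circ> A) = lik m eps f y" for f y
    unfolding lik_def using prod.reindex_bij_betw[OF bij_pts, of "\<lambda>x. if y x = f x then 1 - eps else eps"]
    by simp
  have post: "post m r eps b (y \<circ> A) = post m r eps b y" for b y
  proof -
    have "post m r eps b (y \<circ> A) = (\<Sum>f\<in>{f\<in>RM m r. f (zero_pt m) = b}. lik m eps (f \<circ> A) (y \<circ> A))"
      unfolding post_def by (rule sum.reindex_bij_betw[OF bij_code, symmetric]) (simp add: zero)
    then show ?thesis by (simp add: lik post_def)
  qed
  have dec: "dec_err m r eps b (y \<circ> A) = dec_err m r eps b y" for b y
    by (simp add: dec_err_def post)
  have "(\<Sum>f\<in>RM m r. dec_err m r eps (f (zero_pt m)) (\<lambda>x. f x \<noteq> (z \<circ> A) x))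
      = (\<Sum>f\<in>RM m r. dec_err m r eps ((f \<circ> A) (zero_pt m)) ((\<lambda>x. f x \<noteq> z x) \<circ> A))"
    using sum.reindex_bij_betw[OF bij_code[of "\<lambda>_. True"], symmetric] by (simp add: comp_def invol)
  also have "\<dots> = (\<Sum>f\<in>RM m r. dec_err m r eps (f (zero_pt m)) (\<lambda>x. f x \<noteq> z x))"
    by (simp add: dec zero)
  finally show ?thesis by (simp add: err_prob_def)
qed

lemma err_prob_comp_shear:
  "mu \<le> m \<Longrightarrow> err_prob m r eps (z \<circ> shear mu M (m - mu)) = err_prob m r eps z"
  by (rule err_prob_comp_involution)
    (simp_all add: shear_shear zero_pt_def shear_replicate_False pts_def RM_comp_shear)

lemma noise_w_eq_flip_prob_lik:
  "noise_w m eps (\<lambda>x. f x \<noteq> y x) = flip_prob eps (f (zero_pt m) \<noteq> y (zero_pt m)) * lik m eps f y"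
proof -
  have "noise_w m eps (\<lambda>x. f x \<noteq> y x) = flip_prob eps (f (zero_pt m) \<noteq> y (zero_pt m))
      * (\<Prod>x\<in>pts m - {zero_pt m}. if f x \<noteq> y x then eps else 1 - eps)"
    unfolding noise_w_def by (subst prod.remove[OF finite_pts zero_pt_in_pts]) (simp add: flip_prob_def)
  also have "(\<Prod>x\<in>pts m - {zero_pt m}. if f x \<noteq> y x then eps else 1 - eps) = lik m eps f y"
    unfolding lik_def by (rule prod.cong) auto
  finally show ?thesis .
qed

lemma sum_noise_eq_sum_lik:
  assumes "f \<in> RM m r" "\<And>y c. H (y(zero_pt m := c)) = H y"
  shows "(\<Sum>z\<in>words m. noise_w m eps z * H (\<lambda>x. f x \<noteq> z x))
       = (\<Sum>y\<in>patterns (pts m - {zero_pt m}). lik m eps f y * H y)"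
proof -
  \<comment> \<open>substitute the received word \<open>y = f + z\<close>, then sum out its bit at the zero point, on which
    neither \<open>lik\<close> nor \<open>H\<close> depends\<close>
  have "f \<in> words m" using assms(1) RM_subset_words by blast
  then have "bij_betw (\<lambda>z x. f x \<noteq> z x) (words m) (words m)"
    by (intro bij_betw_involution) (auto simp: words_def)
  define g where "g y = noise_w m eps (\<lambda>x. f x \<noteq> y x) * H y" for y
  have "(\<lambda>x. f x \<noteq> (f x \<noteq> z x)) = z" for z by auto
  then have "(\<Sum>z\<in>words m. noise_w m eps z * H (\<lambda>x. f x \<noteq> z x)) = (\<Sum>z\<in>words m. g (\<lambda>x. f x \<noteq> z x))"
    unfolding g_def by simp
  also have "\<dots> = (\<Sum>y\<in>words m. g y)"
    by (rule sum.reindex_bij_betw[OF \<open>bij_betw _ (words m) (words m)\<close>])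
  also have "\<dots> = (\<Sum>y\<in>patterns (pts m - {zero_pt m}). g (y(zero_pt m := False)) + g (y(zero_pt m := True)))"
    using sum_patterns_insert[of "zero_pt m" "pts m - {zero_pt m}" g]
    by (simp add: words_eq_patterns insert_absorb zero_pt_in_pts)
  also have "\<dots> = (\<Sum>y\<in>patterns (pts m - {zero_pt m}).
      (flip_prob eps (f (zero_pt m) \<noteq> False) + flip_prob eps (f (zero_pt m) \<noteq> True)) * (lik m eps f y * H y))"
  proof (rule sum.cong)
    fix y
    have lik_upd: "lik m eps f (y(zero_pt m := c)) = lik m eps f y" for c
      unfolding lik_def by (rule prod.cong) auto
    show "g (y(zero_pt m := False)) + g (y(zero_pt m := True)) =
      (flip_prob eps (f (zero_pt m) \<noteq> False) + flip_prob eps (f (zero_pt m) \<noteq> True)) * (lik m eps f y * H y)"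
      unfolding g_def noise_w_eq_flip_prob_lik lik_upd assms(2) by (simp add: algebra_simps)
  qed simp
  also have "\<dots> = (\<Sum>y\<in>patterns (pts m - {zero_pt m}). lik m eps f y * H y)"
    by (simp add: flip_prob_def)
  finally show ?thesis .
qed

lemma sum_RM_noise_eq_sum_post:
  assumes "\<And>b y c. H b (y(zero_pt m := c)) = H b y"
  shows "(\<Sum>f\<in>RM m r. \<Sum>z\<in>words m. noise_w m eps z * H (f (zero_pt m)) (\<lambda>x. f x \<noteq> z x))
       = (\<Sum>y\<in>patterns (pts m - {zero_pt m}). \<Sum>b\<in>UNIV. post m r eps b y * H b y)"
proof -
  have "(\<Sum>f\<in>RM m r. \<Sum>z\<in>words m. noise_w m eps z * H (f (zero_pt m)) (\<lambda>x. f x \<noteq> z x))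
      = (\<Sum>y\<in>patterns (pts m - {zero_pt m}). \<Sum>f\<in>RM m r. lik m eps f y * H (f (zero_pt m)) y)"
    using sum_noise_eq_sum_lik[where H="H (_ (zero_pt m))"] assms by (subst sum.swap) (simp cong: sum.cong)
  also have "\<dots> = (\<Sum>y\<in>patterns (pts m - {zero_pt m}). \<Sum>b\<in>UNIV. post m r eps b y * H b y)"
  proof (rule sum.cong)
    fix y
    have "(\<Sum>f\<in>RM m r. lik m eps f y * H (f (zero_pt m)) y)
        = (\<Sum>b\<in>UNIV. \<Sum>f\<in>{f\<in>RM m r. f (zero_pt m) = b}. lik m eps f y * H (f (zero_pt m)) y)"
      by (rule sum.group[OF finite_RM finite_UNIV, symmetric]) simp
    then show "(\<Sum>f\<in>RM m r. lik m eps f y * H (f (zero_pt m)) y) = (\<Sum>b\<in>UNIV. post m r eps b y * H b y)"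
      by (simp add: post_def sum_distrib_right)
  qed simp
  finally show ?thesis .
qed

lemma Pe_le_half: "Pe m r eps \<le> 1 / 2"
proof -
  let ?N = "real (card (RM m r))"
  let ?Y = "patterns (pts m - {zero_pt m})"
  have H: "dec_err m r eps b (y(zero_pt m := c)) = dec_err m r eps b y" for b y c
    by (rule dec_err_cong) auto
  have "?N * Pe m r eps
      = (\<Sum>f\<in>RM m r. \<Sum>z\<in>words m. noise_w m eps z * dec_err m r eps (f (zero_pt m)) (\<lambda>x. f x \<noteq> z x))"
    using card_RM_pos[of m r] by (simp add: Pe_def err_term_def sum_distrib_left)
  also have "\<dots> = (\<Sum>y\<in>?Y. \<Sum>b\<in>UNIV. post m r eps b y * dec_err m r eps b y)"
    by (rule sum_RM_noise_eq_sum_post) (rule H)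
  also have "\<dots> \<le> (\<Sum>y\<in>?Y. \<Sum>b\<in>UNIV. post m r eps b y * (1 / 2))"
    \<comment> \<open>the inner sum is the smaller of the two posterior weights\<close>
    by (rule sum_mono) (auto simp: UNIV_bool dec_err_def)
  also have "\<dots> = (\<Sum>f\<in>RM m r. \<Sum>z\<in>words m. noise_w m eps z * (1 / 2))"
    by (rule sum_RM_noise_eq_sum_post[symmetric]) simp
  also have "\<dots> = ?N / 2"
    by (simp add: words_eq_patterns noise_w_eq_pattern_prob sum_pattern_prob finite_pts flip: sum_divide_distrib)
  finally show ?thesis using card_RM_pos[of m r] by simp
qed

section \<open>Conditioning on a subcube\<close>

definition subcube :: "nat \<Rightarrow> nat \<Rightarrow> bool list set" where
  "subcube m mu = {x \<in> pts m. \<forall>p. mu \<le> p \<and> p < m \<longrightarrow> \<not> x ! p}"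

definition row_parities :: "nat \<Rightarrow> nat \<Rightarrow> (nat \<Rightarrow> nat \<Rightarrow> bool) \<Rightarrow> bool list \<Rightarrow> bool list" where
  "row_parities mu k M x = map (row_parity mu M x) [0..<k]"

definition shear_matrices :: "nat \<Rightarrow> nat \<Rightarrow> (nat \<Rightarrow> nat \<Rightarrow> bool) set" where
  "shear_matrices mu k = {M. \<forall>j i. M j i \<longrightarrow> j < k \<and> i < mu}"

lemma shear_image_subcube_iff:
  assumes "mu \<le> m" "x \<in> pts m"
  shows "x \<in> shear mu M (m - mu) ` subcube m mu \<longleftrightarrow> row_parities mu (m - mu) M x = drop mu x"
proof -
  have "x \<in> shear mu M (m - mu) ` subcube m mu \<longleftrightarrow> shear mu M (m - mu) x \<in> subcube m mu"
    by (rule mem_image_involution) (rule shear_shear)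
  also have "\<dots> \<longleftrightarrow> (\<forall>p. mu \<le> p \<and> p < m \<longrightarrow> x ! p = row_parity mu M x (p - mu))"
    using assms by (auto simp: subcube_def pts_def nth_shear)
  also have "\<dots> \<longleftrightarrow> row_parities mu (m - mu) M x = drop mu x"
    using assms(2) unfolding row_parities_def pts_def list_eq_iff_nth_eq
    by (auto simp: add.commute)
  finally show ?thesis .
qed

lemma row_parities_in_pts: "row_parities mu k M x \<in> pts k"
  by (simp add: row_parities_def pts_def)

lemma finite_shear_matrices: "finite (shear_matrices mu k)"
proof -
  have "shear_matrices mu k \<subseteq> (\<lambda>P j i. (j, i) \<in> P) ` Pow ({..<k} \<times> {..<mu})"
  proof
    fix M assume "M \<in> shear_matrices mu k"
    then have "{(j, i). M j i} \<in> Pow ({..<k} \<times> {..<mu})" by (auto simp: shear_matrices_def)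
    then show "M \<in> (\<lambda>P j i. (j, i) \<in> P) ` Pow ({..<k} \<times> {..<mu})" by (rule rev_image_eqI) simp
  qed
  then show ?thesis by (rule finite_subset) simp
qed

lemma card_shear_matrices_pos: "0 < card (shear_matrices mu k)"
proof -
  have "(\<lambda>_ _. False) \<in> shear_matrices mu k" by (simp add: shear_matrices_def)
  then show ?thesis using finite_shear_matrices card_gt_0_iff by blast
qed

lemma card_row_parities_fibre_le:
  assumes "i0 < mu" "x ! i0" "length u = k" "length u' = k"
  shows "card {M\<in>shear_matrices mu k. row_parities mu k M x = u}
       \<le> card {M\<in>shear_matrices mu k. row_parities mu k M x = u'}"
proof -
  \<comment> \<open>flipping the entries in column \<open>i0\<close> of the rows where \<open>u\<close> and \<open>u'\<close> differ\<close>
  define tog where "tog M j i = (M j i \<noteq> (i = i0 \<and> j < k \<and> u ! j \<noteq> u' ! j))" for M j i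
  have tog_tog: "tog (tog M) = M" for M by (auto simp: tog_def fun_eq_iff)
  have "row_parity mu (tog M) x j = (row_parity mu M x j \<noteq> (j < k \<and> u ! j \<noteq> u' ! j))" for M j
  proof (cases "j < k \<and> u ! j \<noteq> u' ! j")
    case True
    then have "{i. i < mu \<and> tog M j i \<and> x ! i} = sym_diff {i. i < mu \<and> M j i \<and> x ! i} {i0}"
      using assms(1,2) by (auto simp: tog_def)
    then show ?thesis using True by (simp add: row_parity_def odd_card_sym_diff)
  next
    case False
    then show ?thesis by (simp add: row_parity_def tog_def)
  qed
  then have "row_parities mu k (tog M) x = u'" if "row_parities mu k M x = u" for M
    using that assms(3,4) by (auto simp: row_parities_def list_eq_iff_nth_eq)
  moreover have "tog M \<in> shear_matrices mu k" if "M \<in> shear_matrices mu k" for M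
    using that assms(1) by (auto simp: shear_matrices_def tog_def)
  moreover have "inj tog" by (metis injI tog_tog)
  ultimately show ?thesis
    by (intro card_inj_on_le[where f=tog]) (auto intro: inj_on_subset simp: finite_shear_matrices)
qed

lemma row_parities_eq_drop_imp_zero_pt:
  assumes "mu \<le> m" "x \<in> pts m" "\<forall>i<mu. \<not> x ! i" "row_parities mu (m - mu) M x = drop mu x"
  shows "x = zero_pt m"
proof -
  have "row_parity mu M x = (\<lambda>_. False)"
    using assms(3) not_row_parity by blast
  then have "drop mu x = replicate (m - mu) False"
    using assms(4) by (simp add: row_parities_def map_replicate_const flip: assms(4))
  moreover have "take mu x = replicate mu False"
    using assms(1-3) by (auto simp: pts_def list_eq_iff_nth_eq)
  ultimately have "x = replicate mu False @ replicate (m - mu) False"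
    by (metis append_take_drop_id)
  then show ?thesis using assms(1) by (simp add: zero_pt_def flip: replicate_add)
qed

lemma card_shear_covering_le:
  assumes "mu \<le> m" "x \<in> pts m" "x \<noteq> zero_pt m"
  shows "real (card {M\<in>shear_matrices mu (m - mu). x \<in> shear mu M (m - mu) ` subcube m mu})
       \<le> real (card (shear_matrices mu (m - mu))) / 2 ^ (m - mu)"
proof -
  let ?k = "m - mu" and ?J = "shear_matrices mu (m - mu)"
  let ?F = "\<lambda>u. {M\<in>?J. row_parities mu ?k M x = u}"
  have covering: "{M\<in>?J. x \<in> shear mu M ?k ` subcube m mu} = ?F (drop mu x)"
    using shear_image_subcube_iff[OF assms(1,2)] by auto
  have len: "length (drop mu x) = ?k" using assms(2) by (simp add: pts_def)
  show ?thesis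
  proof (cases "\<exists>i0<mu. x ! i0")
    case True
    then obtain i0 where i0: "i0 < mu" "x ! i0" by blast
    have "card (?F u) = card (?F (drop mu x))" if "u \<in> pts ?k" for u
      using that i0 len by (intro antisym card_row_parities_fibre_le) (auto simp: pts_def)
    then have "card ?J = card (pts ?k) * card (?F (drop mu x))"
      by (intro card_eq_card_mult_fibre[where g="\<lambda>M. row_parities mu ?k M x"])
        (auto simp: finite_shear_matrices finite_pts row_parities_in_pts)
    then show ?thesis unfolding covering by (simp add: card_pts)
  next
    case False
    then have empty: "?F (drop mu x) = {}"
      using row_parities_eq_drop_imp_zero_pt[OF assms(1,2)] assms(3) by blast
    show ?thesis unfolding covering empty by simp
  qed
qed

lemma take_in_pts_and_pad_eq:
  assumes "mu \<le> m" "x \<in> subcube m mu"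
  shows "take mu x \<in> pts mu" "take mu x @ replicate (m - mu) False = x"
proof -
  have "drop mu x = replicate (m - mu) False"
    using assms by (auto simp: subcube_def pts_def list_eq_iff_nth_eq)
  then show "take mu x @ replicate (m - mu) False = x" by (metis append_take_drop_id)
  show "take mu x \<in> pts mu" using assms by (auto simp: subcube_def pts_def)
qed

lemma bij_betw_pad_subcube:
  assumes "mu \<le> m"
  shows "bij_betw (\<lambda>ys. ys @ replicate (m - mu) False) (pts mu) (subcube m mu)"
  by (rule bij_betw_byWitness[where f'="take mu"])
    (use assms take_in_pts_and_pad_eq[OF assms] in \<open>auto simp: subcube_def pts_def nth_append\<close>)

definition lift_pattern :: "nat \<Rightarrow> nat \<Rightarrow> (bool list \<Rightarrow> bool) \<Rightarrow> bool list \<Rightarrow> bool" where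
  "lift_pattern m mu z' x = (x \<in> subcube m mu \<and> z' (take mu x))"

lemma bij_betw_lift_pattern:
  assumes "mu \<le> m"
  shows "bij_betw (lift_pattern m mu) (words mu) (patterns (subcube m mu))"
proof (rule bij_betw_byWitness[where f'="\<lambda>v ys. ys \<in> pts mu \<and> v (ys @ replicate (m - mu) False)"])
  have pad: "ys @ replicate (m - mu) False \<in> subcube m mu" "take mu (ys @ replicate (m - mu) False) = ys"
    if "ys \<in> pts mu" for ys
    using bij_betw_apply[OF bij_betw_pad_subcube[OF assms] that] that by (simp_all add: pts_def)
  show "\<forall>z'\<in>words mu. (\<lambda>ys. ys \<in> pts mu \<and> lift_pattern m mu z' (ys @ replicate (m - mu) False)) = z'"
  proof (intro ballI ext)
    fix z' ys assume "z' \<in> words mu"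
    then show "(ys \<in> pts mu \<and> lift_pattern m mu z' (ys @ replicate (m - mu) False)) = z' ys"
      using pad[of ys] by (cases "ys \<in> pts mu") (auto simp: lift_pattern_def words_def)
  qed
  show "\<forall>v\<in>patterns (subcube m mu).
      lift_pattern m mu (\<lambda>ys. ys \<in> pts mu \<and> v (ys @ replicate (m - mu) False)) = v"
  proof (intro ballI ext)
    fix v x assume "v \<in> patterns (subcube m mu)"
    then show "lift_pattern m mu (\<lambda>ys. ys \<in> pts mu \<and> v (ys @ replicate (m - mu) False)) x = v x"
      using take_in_pts_and_pad_eq[OF assms, of x]
      by (cases "x \<in> subcube m mu") (auto simp: lift_pattern_def patterns_def)
  qed
qed (auto simp: lift_pattern_def patterns_def words_def)

lemma subcube_subset_pts: "subcube m mu \<subseteq> pts m"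
  by (auto simp: subcube_def)

lemma lift_pattern_pad:
  "ys \<in> pts mu \<Longrightarrow> mu \<le> m \<Longrightarrow> lift_pattern m mu z' (ys @ replicate (m - mu) False) = z' ys"
  using bij_betw_apply[OF bij_betw_pad_subcube] by (auto simp: lift_pattern_def pts_def)

lemma pattern_prob_lift_pattern:
  assumes "mu \<le> m"
  shows "pattern_prob eps (subcube m mu) (lift_pattern m mu z') = noise_w mu eps z'"
  unfolding pattern_prob_def noise_w_def prod.reindex_bij_betw[OF bij_betw_pad_subcube[OF assms], symmetric]
  by (rule prod.cong) (simp_all add: lift_pattern_pad assms flip_prob_def)

lemma restricts_iff_agree_lift_pattern:
  assumes "mu \<le> m"
  shows "restricts mu m z z' \<longleftrightarrow> (\<forall>x\<in>subcube m mu. z x = lift_pattern m mu z' x)"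
proof -
  have "subcube m mu = (\<lambda>ys. ys @ replicate (m - mu) False) ` pts mu"
    using bij_betw_imp_surj_on[OF bij_betw_pad_subcube[OF assms]] by simp
  then show ?thesis by (simp add: restricts_def lift_pattern_pad assms)
qed

lemma Pe_cond_eq_cond_mean:
  assumes "mu \<le> m"
  shows "Pe_cond mu m r eps z' =
    partial_mean eps (pts m) (subcube m mu) (err_prob m r eps) (lift_pattern m mu z') / noise_w mu eps z'"
proof -
  have C: "{z\<in>words m. restricts mu m z z'}
      = {z\<in>patterns (pts m). \<forall>x\<in>subcube m mu. z x = lift_pattern m mu z' x}"
    by (simp add: words_eq_patterns restricts_iff_agree_lift_pattern[OF assms])
  have "(\<Sum>f\<in>RM m r. \<Sum>z\<in>{z\<in>words m. restricts mu m z z'}. err_term m r eps f z)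
      = partial_mean eps (pts m) (subcube m mu) (err_prob m r eps) (lift_pattern m mu z')"
    unfolding partial_mean_def C err_term_def err_prob_def noise_w_eq_pattern_prob
    by (subst sum.swap) (simp add: sum_distrib_left sum_divide_distrib)
  moreover have "(\<Sum>z\<in>{z\<in>words m. restricts mu m z z'}. noise_w m eps z)
      = partial_mean eps (pts m) (subcube m mu) (\<lambda>_. 1) (lift_pattern m mu z')"
    unfolding partial_mean_def C noise_w_eq_pattern_prob by simp
  moreover have "\<dots> = noise_w mu eps z'"
    by (simp add: partial_mean_const_one[OF finite_pts subcube_subset_pts] pattern_prob_lift_pattern[OF assms])
  ultimately show ?thesis by (simp add: Pe_cond_def)
qed

lemma variance_Pe_cond:
  assumes "mu \<le> m" "0 < eps" "eps < 1"
  shows "(\<Sum>z'\<in>words mu. noise_w mu eps z' * (Pe_cond mu m r eps z' - Pe m r eps)\<^sup>2)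
       = cond_variance eps (pts m) (subcube m mu) (err_prob m r eps)"
  unfolding cond_variance_eq_sum[OF finite_pts subcube_subset_pts assms(2,3)]
    sum.reindex_bij_betw[OF bij_betw_lift_pattern[OF assms(1)], symmetric]
  by (simp add: Pe_cond_eq_cond_mean[OF assms(1)] pattern_prob_lift_pattern[OF assms(1)]
      Pe_eq_expectation words_eq_patterns noise_w_eq_pattern_prob)

lemma variance_Pe_cond_le:
  assumes "mu \<le> m" "0 < eps" "eps < 1"
  shows "cond_variance eps (pts m) (subcube m mu) (err_prob m r eps) \<le> 1 / (4 * 2 ^ (m - mu))"
proof -
  let ?k = "m - mu" and ?J = "shear_matrices mu (m - mu)"
  let ?X = "pts m" and ?W = "subcube m mu" and ?P = "err_prob m r eps"
  have sheared: "cond_variance eps ?X (shear mu M ?k ` ?W) ?P = cond_variance eps ?X ?W ?P" for M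
    unfolding cond_variance_def
    by (subst cond_second_moment_image) (simp_all add: shear_shear shear_image_pts err_prob_comp_shear assms(1))
  \<comment> \<open>a nonzero point lies in at most a fraction \<open>2 ^ (-k)\<close> of the sheared subcubes,
    and \<open>?P\<close> does not depend on the noise at the zero point\<close>
  have "(\<Sum>M\<in>?J. cond_variance eps ?X (shear mu M ?k ` ?W) ?P)
      \<le> real (card ?J) / 2 ^ ?k * cond_variance eps ?X ?X ?P"
  proof (rule sum_cond_variance_le[OF finite_pts finite_shear_matrices _ assms(2,3)])
    show "shear mu M ?k ` ?W \<subseteq> ?X" for M
      using image_mono[OF subcube_subset_pts] shear_image_pts by metis
    show "real (card {M\<in>?J. x \<in> shear mu M ?k ` ?W}) \<le> real (card ?J) / 2 ^ ?k
        \<or> coord_diff x ?P = (\<lambda>_. 0)" if "x \<in> ?X" for x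
      using card_shear_covering_le[OF assms(1) that] coord_diff_err_prob_zero_pt
      by (cases "x = zero_pt m") auto
  qed
  then have "real (card ?J) * cond_variance eps ?X ?W ?P
      \<le> real (card ?J) * (cond_variance eps ?X ?X ?P / 2 ^ ?k)"
    by (simp add: sheared)
  then have "cond_variance eps ?X ?W ?P \<le> cond_variance eps ?X ?X ?P / 2 ^ ?k"
    by (rule mult_left_le_imp_le) (simp add: card_shear_matrices_pos)
  also have "\<dots> \<le> 1 / 4 / 2 ^ ?k"
    by (rule divide_right_mono[OF cond_variance_full_le_quarter[OF finite_pts assms(2,3)]])
      (simp_all add: err_prob_nonneg err_prob_le_one)
  finally show ?thesis by simp
qed

lemma threshold_indicator_le_sq:
  fixes d v E :: real
  assumes "0 \<le> d"
  shows "(if E + d \<le> v then 1 else 0) * d\<^sup>2 \<le> (v - E)\<^sup>2"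
  using assms by (auto intro: power_mono)

theorem lemma3:
  fixes mu m r :: nat and eps :: real
  assumes "mu < m" and "0 < eps" and "eps < 1/2"
  shows "(\<Sum>z'\<in>words mu. noise_w mu eps z' *
            (if Pe_cond mu m r eps z' \<ge> Pe m r eps / 2 + 1/4 then 1 else 0))
           * (1/2 - Pe m r eps)^2
         \<le> (2::real) powr (2 - real (m - mu))"
proof -
  let ?E = "Pe m r eps" and ?k = "m - mu"
  have mu: "mu \<le> m" and eps: "eps < 1" using assms by simp_all
  have threshold: "?E / 2 + 1/4 = ?E + (1/2 - ?E) / 2" by (simp add: field_simps)
  have "(\<Sum>z'\<in>words mu. noise_w mu eps z' * (if Pe_cond mu m r eps z' \<ge> ?E / 2 + 1/4 then 1 else 0))
        * (1/2 - ?E)^2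
      = 4 * (\<Sum>z'\<in>words mu. noise_w mu eps z'
          * ((if ?E + (1/2 - ?E) / 2 \<le> Pe_cond mu m r eps z' then 1 else 0) * ((1/2 - ?E) / 2)\<^sup>2))"
    unfolding threshold by (simp add: sum_distrib_left sum_distrib_right power_divide algebra_simps)
  also have "\<dots> \<le> 4 * (\<Sum>z'\<in>words mu. noise_w mu eps z' * (Pe_cond mu m r eps z' - ?E)\<^sup>2)"
    using threshold_indicator_le_sq Pe_le_half[of m r eps]
      pattern_prob_pos[OF assms(2) eps] noise_w_eq_pattern_prob
    by (intro mult_left_mono sum_mono) (auto intro!: mult_left_mono less_imp_le)
  also have "\<dots> \<le> 4 * (1 / (4 * 2 ^ ?k))"
    unfolding variance_Pe_cond[OF mu assms(2) eps]
    by (rule mult_left_mono[OF variance_Pe_cond_le[OF mu assms(2) eps]]) simp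
  also have "\<dots> \<le> 2 powr (2 - real ?k)"
    by (simp add: powr_diff powr_realpow divide_right_mono)
  finally show ?thesis .
qed

end
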